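(* Let $q$ be a power of an odd prime with $q\equiv3\pmod4$, $d=4k+2$ with $k$ a positive integer, and $A\subset\mathbb F_q^d$. Let $N(A)$ be the number of pairs $(a,b)\in A^2$ with $\|a-b\|=0$. Then \[N(A)\ll\frac{|A|^2}{q}+q^{\frac{d-2}{2}}|A|.\]
   Context: $\|x\|=x_1^2+\cdots+x_d^2$. $X\ll Y$ means $X\le CY$ with $C$ absolute (independent of $q$ and $A$). *)

theory Defs
  imports "HOL-Algebra.Ring" "HOL-Algebra.Ring_Divisibility" "HOL-Library.FuncSet" "HOL-Computational_Algebra.Primes"
begin

definition sqnorm :: "('a, 'b) ring_scheme \<Rightarrow> nat \<Rightarrow> (nat \<Rightarrow> 'a) \<Rightarrow> 'a" where
  "sqnorm R d x = finsum R (\<lambda>i. x i \<otimes>\<^bsub>R\<^esub> x i) {..<d}"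

definition null_pairs :: "('a, 'b) ring_scheme \<Rightarrow> nat \<Rightarrow> (nat \<Rightarrow> 'a) set \<Rightarrow> nat" where
  "null_pairs R d A = card {(a, b). a \<in> A \<and> b \<in> A \<and>
      sqnorm R d (\<lambda>i. a i \<ominus>\<^bsub>R\<^esub> b i) = \<zero>\<^bsub>R\<^esub>}"

end

theory Submission
  imports Defs "HOL-Algebra.Multiplicative_Group"
begin

text \<open>
  Let \<open>Q(x) = x\<^sub>1\<^sup>2 + \<dots> + x\<^sub>d\<^sup>2\<close>; since \<open>q \<equiv> 3 (mod 4)\<close>, \<open>-1\<close> is not a square. For every
  isotropic \<open>m\<close> (\<open>Q(m) = 0\<close>), Cauchy--Schwarz applied to the values \<open>m \<cdot> a\<close>, \<open>a \<in> A\<close>, gives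
  \<open>|A|\<^sup>2 \<le> q \<cdot> #{(a, b) \<in> A\<^sup>2. m \<cdot> (a - b) = 0}\<close>. Summing over the \<open>s\<close> isotropic vectors gives
  \<open>s |A|\<^sup>2 \<le> q \<cdot> \<Sum>(a, b) \<in> A\<^sup>2. T(a - b)\<close>, where \<open>T(z)\<close> counts the isotropic vectors orthogonal
  to \<open>z\<close>. With \<open>P = q\<^bsup>2k\<^esup>\<close> these counts are exact: \<open>s = T(0) = qP\<^sup>2 - (q - 1)P\<close>;
  \<open>T(z) = P\<^sup>2 - (q - 1)P\<close> for isotropic \<open>z \<noteq> 0\<close>, by splitting off a hyperbolic plane through \<open>z\<close>;
  and \<open>T(z) = P\<^sup>2\<close> for anisotropic \<open>z\<close>, which by Witt's theorem may be moved to
  \<open>(0, \<dots>, 0, \<sigma>, \<tau>)\<close>. The level sets of \<open>Q\<close> are counted through \<open>Q(y, s, t) = Q(y) + s\<^sup>2 + t\<^sup>2\<close>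
  and the fact that \<open>s\<^sup>2 + t\<^sup>2\<close> takes every nonzero value exactly \<open>q + 1\<close> times. As \<open>d \<equiv> 2 (mod 4)\<close>,
  the isotropic differences enter with a negative sign, and the inequality rearranges to
  \<open>N(A) \<le> |A|\<^sup>2/q + P |A|\<close>.
\<close>

lemma card_filter_eq_sum_indicator:
  "finite S \<Longrightarrow> real (card {x\<in>S. P x}) = (\<Sum>x\<in>S. if P x then 1 else 0)"
  by (simp add: sum.inter_filter[symmetric])

lemma card_squared_le_collisions:
  assumes A: "finite A" and C: "finite C" and f: "f ` A \<subseteq> C"
  shows "real (card A) ^ 2 \<le> real (card C) * (\<Sum>a\<in>A. \<Sum>b\<in>A. if f a = f b then 1 else 0)"
proof (cases "A = {}")
  case False
  then have "C \<noteq> {}" using f by blast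
  then have Cpos: "real (card C) > 0" using C by (simp add: card_gt_0_iff)
  define fiber where "fiber c = real (card {a\<in>A. f a = c})" for c
  have "(\<Sum>a\<in>A. \<Sum>b\<in>A. if f a = f b then 1 else 0) = (\<Sum>a\<in>A. fiber (f a))"
    unfolding fiber_def using A by (simp add: card_filter_eq_sum_indicator eq_commute)
  also have "\<dots> = (\<Sum>c\<in>C. \<Sum>a\<in>{a\<in>A. f a = c}. fiber (f a))"
    by (rule sum.group[OF A C f, symmetric])
  also have "\<dots> = (\<Sum>c\<in>C. \<Sum>a\<in>{a\<in>A. f a = c}. fiber c)"
    by (intro sum.cong refl) simp
  finally have collisions: "(\<Sum>a\<in>A. \<Sum>b\<in>A. if f a = f b then 1 else 0) = (\<Sum>c\<in>C. fiber c * fiber c)"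
    by (simp add: fiber_def)
  have fibers: "(\<Sum>c\<in>C. fiber c) = real (card A)"
    using sum.group[OF A C f, of "\<lambda>_. 1::real"] by (simp add: fiber_def)
  define mean where "mean = real (card A) / real (card C)"
  \<comment> \<open>Cauchy--Schwarz, in the form that the variance of the fiber sizes is nonnegative.\<close>
  have "0 \<le> (\<Sum>c\<in>C. (fiber c - mean)^2)" by (simp add: sum_nonneg)
  also have "\<dots> = (\<Sum>c\<in>C. fiber c * fiber c - 2 * mean * fiber c + mean^2)"
    by (intro sum.cong refl) (simp add: power2_eq_square algebra_simps)
  also have "\<dots> = (\<Sum>c\<in>C. fiber c * fiber c) - 2 * mean * (\<Sum>c\<in>C. fiber c) + real (card C) * mean^2"
    by (simp add: sum.distrib sum_subtractf sum_distrib_left)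
  also have "\<dots> = (\<Sum>c\<in>C. fiber c * fiber c) - real (card A) ^ 2 / real (card C)"
    unfolding fibers mean_def using Cpos by (simp add: power2_eq_square field_simps)
  finally show ?thesis using Cpos collisions by (simp add: field_simps)
qed simp

section \<open>Vectors and the dot product\<close>

context cring
begin

definition vectors :: "nat \<Rightarrow> (nat \<Rightarrow> 'a) set" where
  "vectors n = {..<n} \<rightarrow>\<^sub>E carrier R"

definition dot :: "nat \<Rightarrow> (nat \<Rightarrow> 'a) \<Rightarrow> (nat \<Rightarrow> 'a) \<Rightarrow> 'a" where
  "dot n x y = (\<Oplus>i\<in>{..<n}. x i \<otimes> y i)"

definition lincomb :: "nat \<Rightarrow> 'a \<Rightarrow> (nat \<Rightarrow> 'a) \<Rightarrow> 'a \<Rightarrow> (nat \<Rightarrow> 'a) \<Rightarrow> nat \<Rightarrow> 'a" where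
  "lincomb n a x b y = (\<lambda>i\<in>{..<n}. a \<otimes> x i \<oplus> b \<otimes> y i)"

definition zero_vector :: "nat \<Rightarrow> nat \<Rightarrow> 'a" where
  "zero_vector n = (\<lambda>i\<in>{..<n}. \<zero>)"

definition norm_count :: "nat \<Rightarrow> 'a \<Rightarrow> nat" where
  "norm_count n e = card {x \<in> vectors n. dot n x x = e}"

definition null_orth_count :: "nat \<Rightarrow> (nat \<Rightarrow> 'a) \<Rightarrow> nat" where
  "null_orth_count n z = card {x \<in> vectors n. dot n x x = \<zero> \<and> dot n x z = \<zero>}"

lemma finite_vectors: "finite (carrier R) \<Longrightarrow> finite (vectors n)"
  by (simp add: vectors_def finite_PiE)

lemma card_vectors: "card (vectors n) = card (carrier R) ^ n"
  by (simp add: vectors_def card_PiE)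

lemma vectors_memD: "x \<in> vectors n \<Longrightarrow> i < n \<Longrightarrow> x i \<in> carrier R"
  by (auto simp: vectors_def)

lemma vector_eqI: "x \<in> vectors n \<Longrightarrow> y \<in> vectors n \<Longrightarrow> (\<And>i. i < n \<Longrightarrow> x i = y i) \<Longrightarrow> x = y"
  unfolding vectors_def by (rule PiE_ext) auto

lemma fun_upd_in_vectors: "y \<in> vectors n \<Longrightarrow> t \<in> carrier R \<Longrightarrow> y(n := t) \<in> vectors (Suc n)"
  unfolding vectors_def lessThan_Suc by (rule PiE_fun_upd) auto

lemma lincomb_in_vectors:
  "a \<in> carrier R \<Longrightarrow> b \<in> carrier R \<Longrightarrow> x \<in> vectors n \<Longrightarrow> y \<in> vectors n \<Longrightarrow> lincomb n a x b y \<in> vectors n"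
  by (auto simp: lincomb_def vectors_def)

lemma lincomb_apply: "i < n \<Longrightarrow> lincomb n a x b y i = a \<otimes> x i \<oplus> b \<otimes> y i"
  by (simp add: lincomb_def)

lemma zero_vector_in_vectors: "zero_vector n \<in> vectors n"
  by (simp add: zero_vector_def vectors_def)

lemma dot_closed: "x \<in> vectors n \<Longrightarrow> y \<in> vectors n \<Longrightarrow> dot n x y \<in> carrier R"
  unfolding dot_def by (rule finsum_closed) (auto simp: vectors_memD)

lemma dot_commute: "x \<in> vectors n \<Longrightarrow> y \<in> vectors n \<Longrightarrow> dot n x y = dot n y x"
  unfolding dot_def by (rule finsum_cong) (auto simp: vectors_memD m_comm)

lemma dot_zero_vector: "y \<in> vectors n \<Longrightarrow> dot n y (zero_vector n) = \<zero>"
  unfolding dot_def zero_vector_def by (simp add: vectors_memD cong: finsum_cong)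

lemma dot_fun_upd:
  assumes y: "y \<in> vectors n" and y': "y' \<in> vectors n" and t: "t \<in> carrier R" and t': "t' \<in> carrier R"
  shows "dot (Suc n) (y(n := t)) (y'(n := t')) = dot n y y' \<oplus> t \<otimes> t'"
proof -
  have "dot (Suc n) (y(n := t)) (y'(n := t')) = t \<otimes> t' \<oplus> (\<Oplus>i\<in>{..<n}. (y(n := t)) i \<otimes> (y'(n := t')) i)"
    unfolding dot_def lessThan_Suc using y y' t t' by (subst finsum_insert) (auto simp: vectors_memD)
  also have "(\<Oplus>i\<in>{..<n}. (y(n := t)) i \<otimes> (y'(n := t')) i) = dot n y y'"
    unfolding dot_def using y y' by (intro finsum_cong) (auto simp: vectors_memD)
  also have "t \<otimes> t' \<oplus> dot n y y' = dot n y y' \<oplus> t \<otimes> t'"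
    using t t' dot_closed[OF y y'] by (simp add: a_comm)
  finally show ?thesis .
qed

lemma sum_vectors_Suc:
  "sum f (vectors (Suc n)) = (\<Sum>t\<in>carrier R. \<Sum>y\<in>vectors n. f (y(n := t)))"
proof -
  have "bij_betw (\<lambda>(t, y). y(n := t)) (carrier R \<times> vectors n) (vectors (Suc n))"
  proof (rule bij_betw_byWitness[where f' = "\<lambda>x. (x n, x(n := undefined))"])
    have "y(n := undefined) = y" if "y \<in> vectors n" for y
      using that PiE_arb[of y "{..<n}" _ n] by (auto simp: vectors_def)
    then show "\<forall>p\<in>carrier R \<times> vectors n. (\<lambda>x. (x n, x(n := undefined))) ((\<lambda>(t, y). y(n := t)) p) = p"
      by auto
    have "x(n := undefined) \<in> vectors n" if "x \<in> vectors (Suc n)" for x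
      using that unfolding vectors_def lessThan_Suc by (intro fun_upd_in_PiE) auto
    then show "(\<lambda>x. (x n, x(n := undefined))) ` vectors (Suc n) \<subseteq> carrier R \<times> vectors n"
      by (auto simp: vectors_memD)
  qed (auto simp: fun_upd_in_vectors)
  then have "sum f (vectors (Suc n)) = (\<Sum>(t, y)\<in>carrier R \<times> vectors n. f (y(n := t)))"
    by (simp add: sum.reindex_bij_betw[symmetric] case_prod_unfold)
  then show ?thesis by (simp add: sum.cartesian_product)
qed

lemma dot_lincomb_left:
  assumes "a \<in> carrier R" "b \<in> carrier R" "x \<in> vectors n" "y \<in> vectors n" "z \<in> vectors n"
  shows "dot n (lincomb n a x b y) z = a \<otimes> dot n x z \<oplus> b \<otimes> dot n y z"
proof -
  have "dot n (lincomb n a x b y) z = (\<Oplus>i\<in>{..<n}. a \<otimes> (x i \<otimes> z i) \<oplus> b \<otimes> (y i \<otimes> z i))"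
    unfolding dot_def using assms by (intro finsum_cong) (auto simp: lincomb_apply vectors_memD l_distr m_assoc)
  also have "\<dots> = (\<Oplus>i\<in>{..<n}. a \<otimes> (x i \<otimes> z i)) \<oplus> (\<Oplus>i\<in>{..<n}. b \<otimes> (y i \<otimes> z i))"
    using assms by (intro finsum_addf) (auto simp: vectors_memD)
  also have "(\<Oplus>i\<in>{..<n}. a \<otimes> (x i \<otimes> z i)) = a \<otimes> dot n x z"
    unfolding dot_def using assms by (intro finsum_rdistr[symmetric]) (auto simp: vectors_memD)
  also have "(\<Oplus>i\<in>{..<n}. b \<otimes> (y i \<otimes> z i)) = b \<otimes> dot n y z"
    unfolding dot_def using assms by (intro finsum_rdistr[symmetric]) (auto simp: vectors_memD)
  finally show ?thesis .
qed

lemma dot_lincomb_right: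
  assumes "a \<in> carrier R" "b \<in> carrier R" "x \<in> vectors n" "y \<in> vectors n" "z \<in> vectors n"
  shows "dot n z (lincomb n a x b y) = a \<otimes> dot n z x \<oplus> b \<otimes> dot n z y"
  using dot_lincomb_left[OF assms] assms by (simp add: dot_commute lincomb_in_vectors)

lemma dot_add_scaled_self:
  assumes x: "x \<in> vectors n" and y: "y \<in> vectors n" and e: "e \<in> carrier R"
  shows "dot n (lincomb n \<one> x e y) (lincomb n \<one> x e y)
       = dot n x x \<oplus> (\<one> \<oplus> \<one>) \<otimes> e \<otimes> dot n x y \<oplus> e \<otimes> e \<otimes> dot n y y"
proof -
  have closed: "dot n x x \<in> carrier R" "dot n x y \<in> carrier R" "dot n y y \<in> carrier R"
    using x y by (simp_all add: dot_closed)
  have "dot n (lincomb n \<one> x e y) (lincomb n \<one> x e y)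
      = \<one> \<otimes> (\<one> \<otimes> dot n x x \<oplus> e \<otimes> dot n x y) \<oplus> e \<otimes> (\<one> \<otimes> dot n x y \<oplus> e \<otimes> dot n y y)"
    using x y e dot_commute[OF y x] by (simp add: dot_lincomb_left dot_lincomb_right lincomb_in_vectors)
  also have "\<dots> = dot n x x \<oplus> (\<one> \<oplus> \<one>) \<otimes> e \<otimes> dot n x y \<oplus> e \<otimes> e \<otimes> dot n y y"
    using closed e by algebra
  finally show ?thesis .
qed

lemma sqnorm_diff:
  assumes "a \<in> vectors n" "b \<in> vectors n"
  shows "sqnorm R n (\<lambda>i. a i \<ominus> b i) = dot n (lincomb n \<one> a (\<ominus> \<one>) b) (lincomb n \<one> a (\<ominus> \<one>) b)"
  unfolding sqnorm_def dot_def using assms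
  by (intro finsum_cong') (auto simp: lincomb_apply vectors_memD minus_eq l_minus)

lemma lincomb_minus_eq_zero_iff:
  assumes a: "a \<in> vectors n" and b: "b \<in> vectors n"
  shows "lincomb n \<one> a (\<ominus> \<one>) b = zero_vector n \<longleftrightarrow> a = b"
proof -
  have pointwise: "lincomb n \<one> a (\<ominus> \<one>) b i = zero_vector n i \<longleftrightarrow> a i = b i" if "i < n" for i
    using that a b by (simp add: lincomb_apply zero_vector_def vectors_memD l_minus minus_eq[symmetric])
  show ?thesis
  proof
    assume "lincomb n \<one> a (\<ominus> \<one>) b = zero_vector n"
    then show "a = b" using pointwise a b by (intro vector_eqI[where n = n]) auto
  next
    assume "a = b"
    then show "lincomb n \<one> a (\<ominus> \<one>) b = zero_vector n"
      using pointwise a b by (intro vector_eqI[where n = n]) (auto simp: lincomb_in_vectors zero_vector_in_vectors)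
  qed
qed

lemma null_pairs_eq_sum:
  assumes "finite A" "A \<subseteq> vectors n"
  shows "real (null_pairs R n A) = (\<Sum>a\<in>A. \<Sum>b\<in>A.
    if dot n (lincomb n \<one> a (\<ominus> \<one>) b) (lincomb n \<one> a (\<ominus> \<one>) b) = \<zero> then 1 else 0)"
proof -
  have V: "a \<in> vectors n" if "a \<in> A" for a using assms(2) that by auto
  have "{(a, b). a \<in> A \<and> b \<in> A \<and> sqnorm R n (\<lambda>i. a i \<ominus> b i) = \<zero>}
      = {p \<in> A \<times> A. dot n (lincomb n \<one> (fst p) (\<ominus> \<one>) (snd p)) (lincomb n \<one> (fst p) (\<ominus> \<one>) (snd p)) = \<zero>}"
    using sqnorm_diff V by auto
  then show ?thesis
    unfolding null_pairs_def using assms(1)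
    by (simp add: card_filter_eq_sum_indicator sum.cartesian_product split_def)
qed

lemma lincomb_add_minus_cancel:
  assumes p: "p \<in> vectors n" and u: "u \<in> vectors n"
  shows "lincomb n \<one> (lincomb n \<one> p \<one> u) (\<ominus> \<one>) p = u"
proof (rule vector_eqI[where n = n])
  fix i assume "i < n"
  moreover have "p i \<in> carrier R" "u i \<in> carrier R" using p u \<open>i < n\<close> vectors_memD by auto
  then have "\<one> \<otimes> (\<one> \<otimes> p i \<oplus> \<one> \<otimes> u i) \<oplus> \<ominus> \<one> \<otimes> p i = u i" by algebra
  ultimately show "lincomb n \<one> (lincomb n \<one> p \<one> u) (\<ominus> \<one>) p i = u i" by (simp add: lincomb_apply)
qed (use p u in \<open>simp_all add: lincomb_in_vectors\<close>)

lemma lincomb_minus_add_cancel: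
  assumes p: "p \<in> vectors n" and v: "v \<in> vectors n"
  shows "lincomb n \<one> p \<one> (lincomb n \<one> v (\<ominus> \<one>) p) = v"
proof (rule vector_eqI[where n = n])
  fix i assume "i < n"
  moreover have "p i \<in> carrier R" "v i \<in> carrier R" using p v \<open>i < n\<close> vectors_memD by auto
  then have "\<one> \<otimes> p i \<oplus> \<one> \<otimes> (\<one> \<otimes> v i \<oplus> \<ominus> \<one> \<otimes> p i) = v i" by algebra
  ultimately show "lincomb n \<one> p \<one> (lincomb n \<one> v (\<ominus> \<one>) p) i = v i" by (simp add: lincomb_apply)
qed (use p v in \<open>simp_all add: lincomb_in_vectors\<close>)

context
  fixes n z w
  assumes z: "z \<in> vectors n" and w: "w \<in> vectors n"
    and zz: "dot n z z = \<zero>" and ww: "dot n w w = \<zero>" and zw: "dot n z w = \<one>"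
begin

lemma dot_hyperbolic_pair:
  assumes a: "a \<in> carrier R" and b: "b \<in> carrier R"
  shows "dot n (lincomb n a z b w) z = b" and "dot n (lincomb n a z b w) w = a"
  using dot_lincomb_left[OF a b z w z] dot_lincomb_left[OF a b z w w]
    zz ww zw dot_commute[OF z w] a b by simp_all

lemma dot_hyperbolic_split:
  assumes a: "a \<in> carrier R" and b: "b \<in> carrier R"
    and u: "u \<in> vectors n" "dot n u z = \<zero>" "dot n u w = \<zero>"
  shows "dot n (lincomb n \<one> (lincomb n a z b w) \<one> u) (lincomb n \<one> (lincomb n a z b w) \<one> u)
      = (\<one> \<oplus> \<one>) \<otimes> a \<otimes> b \<oplus> dot n u u"
    and "dot n (lincomb n \<one> (lincomb n a z b w) \<one> u) z = b"
proof -
  let ?p = "lincomb n a z b w"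
  have p: "?p \<in> vectors n" using a b z w by (simp add: lincomb_in_vectors)
  have pu: "dot n ?p u = \<zero>"
    using dot_lincomb_left[OF a b z w u(1)] u dot_commute[OF z u(1)] dot_commute[OF w u(1)] a b by simp
  have pp: "dot n ?p ?p = a \<otimes> b \<oplus> b \<otimes> a"
    using dot_lincomb_left[OF a b z w p] dot_hyperbolic_pair[OF a b] dot_commute[OF z p] dot_commute[OF w p]
    by simp
  show "dot n (lincomb n \<one> ?p \<one> u) (lincomb n \<one> ?p \<one> u) = (\<one> \<oplus> \<one>) \<otimes> a \<otimes> b \<oplus> dot n u u"
    using dot_add_scaled_self[OF p u(1) one_closed] pp pu dot_closed[OF u(1) u(1)] a b
    by simp algebra
  show "dot n (lincomb n \<one> ?p \<one> u) z = b"
    using dot_lincomb_left[OF one_closed one_closed p u(1) z] dot_hyperbolic_pair(1)[OF a b] u b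
    by simp
qed

lemma sum_vectors_hyperbolic_split:
  "sum h (vectors n) = (\<Sum>a\<in>carrier R. \<Sum>b\<in>carrier R.
      \<Sum>u\<in>{u \<in> vectors n. dot n u z = \<zero> \<and> dot n u w = \<zero>}. h (lincomb n \<one> (lincomb n a z b w) \<one> u))"
proof -
  let ?U = "{u \<in> vectors n. dot n u z = \<zero> \<and> dot n u w = \<zero>}"
  let ?p = "\<lambda>a b. lincomb n a z b w"
  let ?split = "\<lambda>(a, b, u). lincomb n \<one> (?p a b) \<one> u"
  let ?coords = "\<lambda>v. (dot n v w, dot n v z, lincomb n \<one> v (\<ominus> \<one>) (?p (dot n v w) (dot n v z)))"
  have p: "?p a b \<in> vectors n" if "a \<in> carrier R" "b \<in> carrier R" for a b
    using that z w by (simp add: lincomb_in_vectors)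
  have "bij_betw ?split (carrier R \<times> carrier R \<times> ?U) (vectors n)"
  proof (rule bij_betw_byWitness[where f' = ?coords])
    show "\<forall>x\<in>carrier R \<times> carrier R \<times> ?U. ?coords (?split x) = x"
    proof
      fix x assume "x \<in> carrier R \<times> carrier R \<times> ?U"
      then obtain a b u where x: "x = (a, b, u)" and a: "a \<in> carrier R" and b: "b \<in> carrier R"
        and u: "u \<in> vectors n" "dot n u z = \<zero>" "dot n u w = \<zero>" by auto
      have "dot n (lincomb n \<one> (?p a b) \<one> u) w = a"
        using dot_lincomb_left[OF one_closed one_closed p[OF a b] u(1) w] dot_hyperbolic_pair(2)[OF a b] u a
        by simp
      then show "?coords (?split x) = x"
        using x dot_hyperbolic_split(2)[OF a b u] lincomb_add_minus_cancel[OF p[OF a b] u(1)] by simp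
    qed
    show "\<forall>v\<in>vectors n. ?split (?coords v) = v"
      using p z w by (simp add: dot_closed lincomb_minus_add_cancel)
    show "?split ` (carrier R \<times> carrier R \<times> ?U) \<subseteq> vectors n"
      using p by (auto simp: lincomb_in_vectors)
    have "?coords v \<in> carrier R \<times> carrier R \<times> ?U" if v: "v \<in> vectors n" for v
    proof -
      let ?a = "dot n v w" and ?b = "dot n v z"
      have ab: "?a \<in> carrier R" "?b \<in> carrier R" using v z w by (simp_all add: dot_closed)
      have "dot n (lincomb n \<one> v (\<ominus> \<one>) (?p ?a ?b)) y = dot n v y \<ominus> dot n (?p ?a ?b) y"
        if "y \<in> vectors n" for y
        using dot_lincomb_left[OF one_closed _ v p[OF ab] that] v p[OF ab] that
        by (simp add: dot_closed l_minus minus_eq)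
      then show ?thesis
        using v z w ab p[OF ab] dot_hyperbolic_pair[OF ab] by (simp add: lincomb_in_vectors)
    qed
    then show "?coords ` vectors n \<subseteq> carrier R \<times> carrier R \<times> ?U" by blast
  qed
  then have "sum h (vectors n) = (\<Sum>x\<in>carrier R \<times> carrier R \<times> ?U. h (?split x))"
    by (simp add: sum.reindex_bij_betw)
  then show ?thesis by (simp add: sum.cartesian_product split_def)
qed

end

end

context domain
begin

lemma square_eq_square_iff:
  assumes x: "x \<in> carrier R" and y: "y \<in> carrier R"
  shows "x \<otimes> x = y \<otimes> y \<longleftrightarrow> x = y \<or> x = \<ominus> y"
proof -
  have "x \<otimes> x \<ominus> y \<otimes> y = (x \<ominus> y) \<otimes> (x \<oplus> y)" using x y by algebra
  then have "x \<otimes> x = y \<otimes> y \<longleftrightarrow> x \<ominus> y = \<zero> \<or> x \<oplus> y = \<zero>"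
    using x y integral_iff by (metis a_closed m_closed minus_closed r_right_minus_eq)
  then show ?thesis using x y minus_equality[of x y] by (auto simp: l_neg)
qed

lemma card_square_roots_le_2: "card {x \<in> carrier R. x \<otimes> x = s} \<le> 2"
proof (cases "\<exists>x0\<in>carrier R. x0 \<otimes> x0 = s")
  case True
  then obtain x0 where x0: "x0 \<in> carrier R" "x0 \<otimes> x0 = s" by blast
  then have "{x \<in> carrier R. x \<otimes> x = s} \<subseteq> {x0, \<ominus> x0}" using square_eq_square_iff by auto
  then have "card {x \<in> carrier R. x \<otimes> x = s} \<le> card {x0, \<ominus> x0}" by (simp add: card_mono)
  also have "\<dots> \<le> 2" by (simp add: card_insert_le_m1)
  finally show ?thesis .
next
  case False
  then have "{x \<in> carrier R. x \<otimes> x = s} = {}" by blast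
  then show ?thesis by (metis card.empty zero_le)
qed

end

section \<open>Reflections and Witt's theorem\<close>

context field
begin

definition reflection :: "nat \<Rightarrow> (nat \<Rightarrow> 'a) \<Rightarrow> (nat \<Rightarrow> 'a) \<Rightarrow> nat \<Rightarrow> 'a" where
  "reflection n v x = lincomb n \<one> x (\<ominus> ((\<one> \<oplus> \<one>) \<otimes> dot n x v \<otimes> inv (dot n v v))) v"

context
  fixes n v
  assumes v: "v \<in> vectors n" and anisotropic: "dot n v v \<noteq> \<zero>"
begin

lemma inv_dot_self: "inv (dot n v v) \<in> carrier R" "dot n v v \<otimes> inv (dot n v v) = \<one>"
  using anisotropic dot_closed[OF v v] by (auto simp: field_Units)

lemma reflection_in_vectors: "x \<in> vectors n \<Longrightarrow> reflection n v x \<in> vectors n"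
  unfolding reflection_def using v inv_dot_self by (intro lincomb_in_vectors) (auto simp: dot_closed)

lemma dot_reflection:
  assumes x: "x \<in> vectors n" and y: "y \<in> vectors n"
  shows "dot n (reflection n v x) (reflection n v y) = dot n x y"
proof -
  define w where "w = inv (dot n v v)"
  define xv where "xv = dot n x v"
  define yv where "yv = dot n y v"
  have closed: "w \<in> carrier R" "xv \<in> carrier R" "yv \<in> carrier R" "dot n x y \<in> carrier R" "dot n v v \<in> carrier R"
    using inv_dot_self v x y dot_closed by (auto simp: w_def xv_def yv_def)
  have "dot n (reflection n v x) (reflection n v y) =
     dot n x y \<oplus> \<ominus> ((\<one> \<oplus> \<one>) \<otimes> xv \<otimes> w) \<otimes> yv \<oplus>
        \<ominus> ((\<one> \<oplus> \<one>) \<otimes> yv \<otimes> w) \<otimes> (xv \<oplus> \<ominus> ((\<one> \<oplus> \<one>) \<otimes> xv \<otimes> w) \<otimes> dot n v v)"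
    unfolding reflection_def using x y v closed dot_commute[OF v y]
    by (simp add: dot_lincomb_left dot_lincomb_right lincomb_in_vectors
        w_def[symmetric] xv_def[symmetric] yv_def[symmetric])
  also have "\<dots> = dot n x y \<oplus> ((\<one> \<oplus> \<one>) \<otimes> (\<one> \<oplus> \<one>) \<otimes> xv \<otimes> yv \<otimes> w) \<otimes> (w \<otimes> dot n v v \<ominus> \<one>)"
    using closed by algebra
  also have "\<dots> = dot n x y"
    using closed inv_dot_self by (simp add: w_def m_comm minus_eq r_neg)
  finally show ?thesis .
qed

lemma reflection_reflection:
  assumes x: "x \<in> vectors n"
  shows "reflection n v (reflection n v x) = x"
proof -
  define w where "w = inv (dot n v v)"
  define xv where "xv = dot n x v"
  have closed: "w \<in> carrier R" "xv \<in> carrier R" "dot n v v \<in> carrier R"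
    using inv_dot_self v x dot_closed by (auto simp: w_def xv_def)
  have "dot n (reflection n v x) v = \<one> \<otimes> xv \<oplus> (\<ominus> ((\<one> \<oplus> \<one>) \<otimes> xv \<otimes> w)) \<otimes> dot n v v"
    unfolding reflection_def using x v closed
    by (simp add: dot_lincomb_left w_def[symmetric] xv_def[symmetric])
  also have "\<dots> = \<ominus> xv \<oplus> ((\<one> \<oplus> \<one>) \<otimes> xv) \<otimes> (\<one> \<ominus> w \<otimes> dot n v v)"
    using closed by algebra
  also have "\<dots> = \<ominus> xv"
    using closed inv_dot_self by (simp add: w_def m_comm minus_eq r_neg)
  finally have reflected_v: "dot n (reflection n v x) v = \<ominus> xv" .
  show ?thesis
  proof (rule vector_eqI)
    fix i assume i: "i < n"
    have "x i \<in> carrier R" "v i \<in> carrier R" using x v i vectors_memD by auto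
    then have "\<one> \<otimes> (\<one> \<otimes> x i \<oplus> \<ominus> ((\<one> \<oplus> \<one>) \<otimes> xv \<otimes> w) \<otimes> v i)
        \<oplus> \<ominus> ((\<one> \<oplus> \<one>) \<otimes> \<ominus> xv \<otimes> w) \<otimes> v i = x i"
      using closed by algebra
    then show "reflection n v (reflection n v x) i = x i"
      using i reflected_v by (simp add: reflection_def lincomb_apply w_def xv_def)
  qed (use x reflection_in_vectors in auto)
qed

lemma bij_betw_reflection: "bij_betw (reflection n v) (vectors n) (vectors n)"
  by (rule bij_betw_byWitness[where f' = "reflection n v"])
    (auto simp: reflection_reflection reflection_in_vectors)

end

lemma null_orth_count_isometry:
  assumes bij: "bij_betw \<tau> (vectors n) (vectors n)"
    and isometry: "\<And>x y. x \<in> vectors n \<Longrightarrow> y \<in> vectors n \<Longrightarrow> dot n (\<tau> x) (\<tau> y) = dot n x y"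
    and z: "z \<in> vectors n"
  shows "null_orth_count n (\<tau> z) = null_orth_count n z"
proof -
  let ?S = "{x \<in> vectors n. dot n x x = \<zero> \<and> dot n x z = \<zero>}"
  have surj: "\<tau> ` vectors n = vectors n" using bij by (rule bij_betw_imp_surj_on)
  have "{x \<in> vectors n. dot n x x = \<zero> \<and> dot n x (\<tau> z) = \<zero>} = \<tau> ` ?S"
  proof
    show "\<tau> ` ?S \<subseteq> {x \<in> vectors n. dot n x x = \<zero> \<and> dot n x (\<tau> z) = \<zero>}"
      using surj isometry z by auto
    show "{x \<in> vectors n. dot n x x = \<zero> \<and> dot n x (\<tau> z) = \<zero>} \<subseteq> \<tau> ` ?S"
    proof
      fix x assume x: "x \<in> {x \<in> vectors n. dot n x x = \<zero> \<and> dot n x (\<tau> z) = \<zero>}"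
      then obtain y where "y \<in> vectors n" "x = \<tau> y" using surj by blast
      then show "x \<in> \<tau> ` ?S" using x isometry z by auto
    qed
  qed
  moreover have "inj_on \<tau> ?S"
    using bij_betw_imp_inj_on[OF bij] by (rule inj_on_subset) auto
  ultimately show ?thesis unfolding null_orth_count_def by (simp add: card_image)
qed

lemma null_orth_count_reflection:
  "v \<in> vectors n \<Longrightarrow> dot n v v \<noteq> \<zero> \<Longrightarrow> z \<in> vectors n \<Longrightarrow>
    null_orth_count n (reflection n v z) = null_orth_count n z"
  by (rule null_orth_count_isometry[OF bij_betw_reflection dot_reflection])

lemma null_orth_count_scale:
  assumes a: "a \<in> carrier R" "a \<noteq> \<zero>" and z: "z \<in> vectors n"
  shows "null_orth_count n (lincomb n a z \<zero> z) = null_orth_count n z"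
proof -
  have "dot n x (lincomb n a z \<zero> z) = \<zero> \<longleftrightarrow> dot n x z = \<zero>" if x: "x \<in> vectors n" for x
  proof -
    have "dot n x (lincomb n a z \<zero> z) = a \<otimes> dot n x z"
      using dot_lincomb_right[OF a(1) zero_closed z z x] dot_closed[OF x z] a by simp
    then show ?thesis using a dot_closed[OF x z] integral by auto
  qed
  then show ?thesis unfolding null_orth_count_def by (metis (lifting))
qed

text \<open>Witt's theorem in the form needed here: the reflection in \<open>z - z'\<close> or in \<open>z + z'\<close>
  (whichever is anisotropic) maps \<open>z\<close> to \<open>\<plusminus>z'\<close>.\<close>

lemma reflection_of_equal_norm:
  assumes z: "z \<in> vectors n" and z': "z' \<in> vectors n" and same_norm: "dot n z z = dot n z' z'"
    and e: "e \<in> carrier R" "e \<otimes> e = \<one>"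
    and anisotropic: "dot n (lincomb n \<one> z e z') (lincomb n \<one> z e z') \<noteq> \<zero>"
  shows "reflection n (lincomb n \<one> z e z') z = lincomb n (\<ominus> e) z' \<zero> z'"
proof -
  define v where "v = lincomb n \<one> z e z'"
  have v: "v \<in> vectors n" using z z' e by (simp add: v_def lincomb_in_vectors)
  have closed: "dot n z z \<in> carrier R" "dot n z z' \<in> carrier R" "dot n v v \<in> carrier R"
    using dot_closed z z' v by auto
  have inv_vv: "inv (dot n v v) \<in> carrier R" "dot n v v \<otimes> inv (dot n v v) = \<one>"
    using anisotropic closed by (auto simp: v_def field_Units)
  have zv: "dot n z v = \<one> \<otimes> dot n z z \<oplus> e \<otimes> dot n z z'"
    unfolding v_def using z z' e by (simp add: dot_lincomb_right)
  have "dot n v v = dot n z z \<oplus> (\<one> \<oplus> \<one>) \<otimes> e \<otimes> dot n z z' \<oplus> e \<otimes> e \<otimes> dot n z z"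
    unfolding v_def using dot_add_scaled_self[OF z z' e(1)] same_norm by simp
  also have "\<dots> = (\<one> \<oplus> \<one>) \<otimes> (\<one> \<otimes> dot n z z \<oplus> e \<otimes> dot n z z')"
    using closed e by algebra
  finally have "(\<one> \<oplus> \<one>) \<otimes> dot n z v \<otimes> inv (dot n v v) = \<one>"
    using zv inv_vv by simp
  then have "reflection n v z i = \<ominus> e \<otimes> z' i \<oplus> \<zero> \<otimes> z' i" if i: "i < n" for i
  proof -
    have "z i \<in> carrier R" "z' i \<in> carrier R" using i z z' vectors_memD by auto
    then have "\<one> \<otimes> z i \<oplus> \<ominus> \<one> \<otimes> (\<one> \<otimes> z i \<oplus> e \<otimes> z' i) = \<ominus> e \<otimes> z' i \<oplus> \<zero> \<otimes> z' i"
      using e(1) by algebra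
    then show ?thesis
      using i \<open>(\<one> \<oplus> \<one>) \<otimes> dot n z v \<otimes> inv (dot n v v) = \<one>\<close>
      by (simp add: reflection_def lincomb_apply v_def)
  qed
  then show ?thesis
    using v anisotropic z z' e
    by (intro vector_eqI[where n = n])
      (auto simp: v_def[symmetric] reflection_in_vectors lincomb_in_vectors lincomb_apply)
qed

lemma null_orth_count_eq_if_equal_norm:
  assumes two: "\<one> \<oplus> \<one> \<noteq> \<zero>"
    and z: "z \<in> vectors n" and z': "z' \<in> vectors n"
    and same_norm: "dot n z z = dot n z' z'" and anisotropic: "dot n z z \<noteq> \<zero>"
  shows "null_orth_count n z = null_orth_count n z'"
proof -
  have swap: "null_orth_count n z = null_orth_count n z'"
    if e: "e \<in> carrier R" "e \<otimes> e = \<one>"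
      and v: "dot n (lincomb n \<one> z e z') (lincomb n \<one> z e z') \<noteq> \<zero>" for e
  proof -
    have "e \<noteq> \<zero>" using e by auto
    then have "\<ominus> e \<noteq> \<zero>" using e(1) by (metis add.inv_eq_1_iff)
    have "null_orth_count n z = null_orth_count n (reflection n (lincomb n \<one> z e z') z)"
      using null_orth_count_reflection[OF _ v z] z z' e by (simp add: lincomb_in_vectors)
    also have "\<dots> = null_orth_count n z'"
      using reflection_of_equal_norm[OF z z' same_norm e v] null_orth_count_scale[OF _ _ z']
        \<open>\<ominus> e \<noteq> \<zero>\<close> e(1) by simp
    finally show ?thesis .
  qed
  have closed: "dot n z z \<in> carrier R" "dot n z z' \<in> carrier R" using z z' by (simp_all add: dot_closed)
  have minus_one: "\<ominus> \<one> \<in> carrier R" "\<ominus> \<one> \<otimes> \<ominus> \<one> = \<one>" by (simp_all add: l_minus r_minus)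
  \<comment> \<open>parallelogram law: the norms of \<open>z + z'\<close> and \<open>z - z'\<close> add up to \<open>4 \<cdot> dot n z z \<noteq> 0\<close>\<close>
  have "dot n (lincomb n \<one> z \<one> z') (lincomb n \<one> z \<one> z')
      \<oplus> dot n (lincomb n \<one> z (\<ominus> \<one>) z') (lincomb n \<one> z (\<ominus> \<one>) z')
      = (\<one> \<oplus> \<one>) \<otimes> (\<one> \<oplus> \<one>) \<otimes> dot n z z"
    using dot_add_scaled_self[OF z z' one_closed] dot_add_scaled_self[OF z z' minus_one(1)]
      same_norm[symmetric] closed by simp algebra
  moreover have "(\<one> \<oplus> \<one>) \<otimes> (\<one> \<oplus> \<one>) \<otimes> dot n z z \<noteq> \<zero>"
    using two anisotropic closed integral by (metis add.m_closed m_closed one_closed)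
  ultimately consider "dot n (lincomb n \<one> z \<one> z') (lincomb n \<one> z \<one> z') \<noteq> \<zero>"
    | "dot n (lincomb n \<one> z (\<ominus> \<one>) z') (lincomb n \<one> z (\<ominus> \<one>) z') \<noteq> \<zero>"
    by fastforce
  then show ?thesis
  proof cases
    case 1
    then show ?thesis by (intro swap[of \<one>]) simp_all
  next
    case 2
    then show ?thesis using minus_one by (intro swap[of "\<ominus> \<one>"])
  qed
qed

definition circle :: "'a \<Rightarrow> ('a \<times> 'a) set" where
  "circle g = {p \<in> carrier R \<times> carrier R. fst p \<otimes> fst p \<oplus> snd p \<otimes> snd p = g}"

text \<open>Multiplication by \<open>u + iv\<close> maps the circle of norm \<open>1\<close> onto that of norm \<open>u\<^sup>2 + v\<^sup>2\<close>.\<close>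

lemma bij_betw_circle_rotation:
  assumes uv: "u \<in> carrier R" "v \<in> carrier R" and uvg: "u \<otimes> u \<oplus> v \<otimes> v = g" and g: "g \<noteq> \<zero>"
  shows "bij_betw (\<lambda>(x, y). (x \<otimes> u \<ominus> y \<otimes> v, x \<otimes> v \<oplus> y \<otimes> u)) (circle \<one>) (circle g)"
proof -
  have "g \<in> carrier R" using uv uvg by auto
  then have inv_g: "inv g \<in> carrier R" "g \<otimes> inv g = \<one>" using g by (auto simp: field_Units)
  have cancel: "a \<otimes> g \<otimes> inv g = a" if "a \<in> carrier R" for a
    using that \<open>g \<in> carrier R\<close> inv_g by (simp add: m_assoc)
  define rot where "rot = (\<lambda>(x, y). (x \<otimes> u \<ominus> y \<otimes> v, x \<otimes> v \<oplus> y \<otimes> u))"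
  define unrot where "unrot = (\<lambda>(x, y). ((x \<otimes> u \<oplus> y \<otimes> v) \<otimes> inv g, (y \<otimes> u \<ominus> x \<otimes> v) \<otimes> inv g))"
  show ?thesis unfolding rot_def[symmetric]
  proof (rule bij_betw_byWitness[where f' = unrot])
    show "\<forall>p\<in>circle \<one>. unrot (rot p) = p"
    proof (clarsimp simp: circle_def)
      fix x y assume xy: "x \<in> carrier R" "y \<in> carrier R"
      have "(x \<otimes> u \<ominus> y \<otimes> v) \<otimes> u \<oplus> (x \<otimes> v \<oplus> y \<otimes> u) \<otimes> v = x \<otimes> (u \<otimes> u \<oplus> v \<otimes> v)"
        and "(x \<otimes> v \<oplus> y \<otimes> u) \<otimes> u \<ominus> (x \<otimes> u \<ominus> y \<otimes> v) \<otimes> v = y \<otimes> (u \<otimes> u \<oplus> v \<otimes> v)"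
        using xy uv by algebra+
      then have "((x \<otimes> u \<ominus> y \<otimes> v) \<otimes> u \<oplus> (x \<otimes> v \<oplus> y \<otimes> u) \<otimes> v) \<otimes> inv g = x"
        and "((x \<otimes> v \<oplus> y \<otimes> u) \<otimes> u \<ominus> (x \<otimes> u \<ominus> y \<otimes> v) \<otimes> v) \<otimes> inv g = y"
        unfolding uvg using cancel xy by simp_all
      then show "unrot (rot (x, y)) = (x, y)" by (simp add: rot_def unrot_def)
    qed
    show "\<forall>p\<in>circle g. rot (unrot p) = p"
    proof (clarsimp simp: circle_def)
      fix x y assume xy: "x \<in> carrier R" "y \<in> carrier R"
      have "((x \<otimes> u \<oplus> y \<otimes> v) \<otimes> inv g) \<otimes> u \<ominus> ((y \<otimes> u \<ominus> x \<otimes> v) \<otimes> inv g) \<otimes> v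
          = x \<otimes> (u \<otimes> u \<oplus> v \<otimes> v) \<otimes> inv g"
        and "((x \<otimes> u \<oplus> y \<otimes> v) \<otimes> inv g) \<otimes> v \<oplus> ((y \<otimes> u \<ominus> x \<otimes> v) \<otimes> inv g) \<otimes> u
          = y \<otimes> (u \<otimes> u \<oplus> v \<otimes> v) \<otimes> inv g"
        using xy uv inv_g by algebra+
      then have "((x \<otimes> u \<oplus> y \<otimes> v) \<otimes> inv g) \<otimes> u \<ominus> ((y \<otimes> u \<ominus> x \<otimes> v) \<otimes> inv g) \<otimes> v = x"
        and "((x \<otimes> u \<oplus> y \<otimes> v) \<otimes> inv g) \<otimes> v \<oplus> ((y \<otimes> u \<ominus> x \<otimes> v) \<otimes> inv g) \<otimes> u = y"
        unfolding uvg using cancel xy by simp_all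
      then show "rot (unrot (x, y)) = (x, y)" by (simp add: rot_def unrot_def)
    qed
    have norm_mult: "(x \<otimes> u \<ominus> y \<otimes> v) \<otimes> (x \<otimes> u \<ominus> y \<otimes> v) \<oplus> (x \<otimes> v \<oplus> y \<otimes> u) \<otimes> (x \<otimes> v \<oplus> y \<otimes> u)
        = (x \<otimes> x \<oplus> y \<otimes> y) \<otimes> (u \<otimes> u \<oplus> v \<otimes> v)" if "x \<in> carrier R" "y \<in> carrier R" for x y
      using that uv by algebra
    show "rot ` circle \<one> \<subseteq> circle g"
      using norm_mult uv \<open>g \<in> carrier R\<close> by (auto simp: rot_def circle_def uvg)
    have "((x \<otimes> u \<oplus> y \<otimes> v) \<otimes> inv g) \<otimes> ((x \<otimes> u \<oplus> y \<otimes> v) \<otimes> inv g) \<oplus>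
          ((y \<otimes> u \<ominus> x \<otimes> v) \<otimes> inv g) \<otimes> ((y \<otimes> u \<ominus> x \<otimes> v) \<otimes> inv g)
        = ((x \<otimes> x \<oplus> y \<otimes> y) \<otimes> inv g) \<otimes> ((u \<otimes> u \<oplus> v \<otimes> v) \<otimes> inv g)" if "x \<in> carrier R" "y \<in> carrier R" for x y
      using that uv inv_g by algebra
    then show "unrot ` circle g \<subseteq> circle \<one>"
      using uv inv_g \<open>g \<in> carrier R\<close> by (auto simp: unrot_def circle_def uvg)
  qed
qed

lemma exists_hyperbolic_partner:
  assumes two: "\<one> \<oplus> \<one> \<noteq> \<zero>"
    and z: "z \<in> vectors n" and i: "i < n" "z i \<noteq> \<zero>" and zz: "dot n z z = \<zero>"
  shows "\<exists>w\<in>vectors n. dot n z w = \<one> \<and> dot n w w = \<zero>"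
proof -
  have zi: "z i \<in> carrier R" "inv (z i) \<in> carrier R" "z i \<otimes> inv (z i) = \<one>"
    using z i vectors_memD by (auto simp: field_Units)
  define w0 where "w0 = (\<lambda>j\<in>{..<n}. if j = i then inv (z i) else \<zero>)"
  have w0: "w0 \<in> vectors n" using zi by (auto simp: w0_def vectors_def)
  have "dot n z w0 = (\<Oplus>j\<in>{..<n}. if j = i then \<one> else \<zero>)"
    unfolding dot_def w0_def using z zi by (intro finsum_cong') (auto simp: vectors_memD)
  also have "\<dots> = \<one>" using i add.finprod_singleton_swap[of i "{..<n}" "\<lambda>_. \<one>"] by simp
  finally have zw0: "dot n z w0 = \<one>" .
  have half: "inv (\<one> \<oplus> \<one>) \<in> carrier R" "(\<one> \<oplus> \<one>) \<otimes> inv (\<one> \<oplus> \<one>) = \<one>"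
    using two by (auto simp: field_Units)
  have w0w0: "dot n w0 w0 \<in> carrier R" using w0 by (simp add: dot_closed)
  \<comment> \<open>correct \<open>w0\<close> along the isotropic \<open>z\<close> to make it isotropic itself\<close>
  define e where "e = \<ominus> (dot n w0 w0 \<otimes> inv (\<one> \<oplus> \<one>))"
  have e: "e \<in> carrier R" using half w0w0 by (simp add: e_def)
  define w where "w = lincomb n \<one> w0 e z"
  have w: "w \<in> vectors n" using w0 z e by (simp add: w_def lincomb_in_vectors)
  have "dot n z w = \<one>"
    using dot_lincomb_right[OF one_closed e w0 z z] zw0 zz e by (simp add: w_def)
  moreover have "dot n w w = \<zero>"
  proof -
    have "dot n w w = dot n w0 w0 \<oplus> (\<one> \<oplus> \<one>) \<otimes> e \<otimes> dot n w0 z \<oplus> e \<otimes> e \<otimes> dot n z z"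
      unfolding w_def by (rule dot_add_scaled_self[OF w0 z e])
    also have "\<dots> = dot n w0 w0 \<oplus> \<ominus> (dot n w0 w0 \<otimes> ((\<one> \<oplus> \<one>) \<otimes> inv (\<one> \<oplus> \<one>)))"
      using dot_commute[OF w0 z] zw0 zz e w0w0 half(1) unfolding e_def by (simp add: m_ac r_minus)
    also have "\<dots> = \<zero>" using half w0w0 by (simp add: r_neg)
    finally show ?thesis .
  qed
  ultimately show ?thesis using w by blast
qed

end

section \<open>Counting over finite fields\<close>

locale finite_field = field R for R (structure) +
  assumes finite_carrier: "finite (carrier R)"
begin

abbreviation q :: real where "q \<equiv> real (order R)"

lemma order_gt_1: "order R > 1"
proof -
  have "card {\<zero>, \<one>} \<le> order R"
    unfolding order_def by (rule card_mono[OF finite_carrier]) simp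
  then show ?thesis by simp
qed

lemma card_vectors_filter_eq_sum:
  "real (card {v \<in> vectors n. P v}) = (\<Sum>v\<in>vectors n. if P v then 1 else 0)"
  by (rule card_filter_eq_sum_indicator[OF finite_vectors[OF finite_carrier]])

lemma two_ne_zero_if_odd_order:
  assumes "odd (order R)"
  shows "\<one> \<oplus> \<one> \<noteq> \<zero>"
proof
  assume two: "\<one> \<oplus> \<one> = \<zero>"
  obtain m where m: "order R = Suc (2 * m)" using assms oddE by (metis Suc_eq_plus1)
  have "add_pow R (2::nat) \<one> = \<one> \<oplus> \<one>" by (simp add: numeral_2_eq_2)
  then have "add_pow R (2 * m) \<one> = add_pow R m (\<one> \<oplus> \<one>)"
    by (metis add.nat_pow_pow one_closed)
  then have "add_pow R (2 * m) \<one> = \<zero>" using two by simp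
  moreover have "add_pow R (order R) \<one> = \<zero>"
    using add.pow_order_eq_1[of \<one>] by (simp add: order_def)
  ultimately show False using m by simp
qed

lemma pow_order_minus_1:
  assumes "x \<in> carrier R" "x \<noteq> \<zero>"
  shows "x [^] (order R - 1) = \<one>"
proof -
  have "order (units_of R) = order R - 1"
    unfolding order_def units_of_carrier field_Units using finite_carrier by (simp add: card.remove)
  then show ?thesis
    using group.pow_order_eq_1[OF units_group, of x] assms
    by (simp add: units_of_pow units_of_carrier units_of_one field_Units)
qed

lemma card_squares_ge: "order R + 1 \<le> 2 * card ((\<lambda>x. x \<otimes> x) ` carrier R)"
proof -
  define S where "S = (\<lambda>x. x \<otimes> x) ` carrier R"
  have "\<zero> \<in> S" unfolding S_def by (rule image_eqI[where x = \<zero>]) simp_all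
  then have S: "finite S" "\<zero> \<in> S" using finite_carrier by (auto simp: S_def)
  have "order R = (\<Sum>s\<in>S. card {x \<in> carrier R. x \<otimes> x = s})"
    using sum.group[of "carrier R" S "\<lambda>x. x \<otimes> x" "\<lambda>_. 1::nat"] finite_carrier S
    by (simp add: S_def order_def)
  also have "\<dots> = card {x \<in> carrier R. x \<otimes> x = \<zero>} + (\<Sum>s\<in>S - {\<zero>}. card {x \<in> carrier R. x \<otimes> x = s})"
    using S by (simp add: sum.remove)
  also have "\<dots> \<le> 1 + (\<Sum>s\<in>S - {\<zero>}. 2)"
  proof (intro add_mono sum_mono card_square_roots_le_2)
    have "{x \<in> carrier R. x \<otimes> x = \<zero>} = {\<zero>}" using integral by auto
    then show "card {x \<in> carrier R. x \<otimes> x = \<zero>} \<le> 1" by simp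
  qed
  finally have "order R \<le> 1 + 2 * (card S - 1)" using S by simp
  moreover have "card S > 0" using S by (auto simp: card_gt_0_iff)
  ultimately show ?thesis unfolding S_def by linarith
qed

text \<open>Squares and their translates \<open>g - y\<^sup>2\<close> each fill more than half of the field, so they meet.\<close>

lemma sum_of_two_squares:
  assumes g: "g \<in> carrier R"
  shows "\<exists>x\<in>carrier R. \<exists>y\<in>carrier R. x \<otimes> x \<oplus> y \<otimes> y = g"
proof -
  define S where "S = (\<lambda>x. x \<otimes> x) ` carrier R"
  have S: "finite S" "S \<subseteq> carrier R" using finite_carrier by (auto simp: S_def)
  have "card ((\<lambda>s. g \<ominus> s) ` S) = card S"
  proof (intro card_image inj_on_inverseI[where g = "\<lambda>s. g \<ominus> s"])
    fix s assume "s \<in> S"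
    then show "g \<ominus> (g \<ominus> s) = s" using S g by (simp add: subset_iff) algebra
  qed
  moreover have "card (S \<union> (\<lambda>s. g \<ominus> s) ` S) \<le> order R"
    using S g finite_carrier unfolding order_def by (intro card_mono) auto
  ultimately have "S \<inter> (\<lambda>s. g \<ominus> s) ` S \<noteq> {}"
    using S card_squares_ge[folded S_def] card_Un_disjoint[of S "(\<lambda>s. g \<ominus> s) ` S"] by auto
  then obtain x y where xy: "x \<in> carrier R" "y \<in> carrier R" "x \<otimes> x = g \<ominus> y \<otimes> y"
    unfolding S_def by auto
  then have "x \<otimes> x \<oplus> y \<otimes> y = g" using g by algebra
  then show ?thesis using xy by blast
qed

lemma count_mult_eq:
  assumes c: "c \<in> carrier R" "c \<noteq> \<zero>" and g: "g \<in> carrier R"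
  shows "(\<Sum>b\<in>carrier R. if c \<otimes> b = g then 1 else 0) = (1::real)"
proof -
  have inv_c: "inv c \<in> carrier R" "inv c \<otimes> c = \<one>" using c by (auto simp: field_Units)
  have "c \<otimes> b = g \<longleftrightarrow> b = inv c \<otimes> g" if b: "b \<in> carrier R" for b
  proof
    assume "c \<otimes> b = g"
    then show "b = inv c \<otimes> g" using inv_c c b by (metis l_one m_assoc)
  next
    assume "b = inv c \<otimes> g"
    then show "c \<otimes> b = g" using inv_c c g by (metis l_one m_assoc m_comm)
  qed
  then have "(\<Sum>b\<in>carrier R. if c \<otimes> b = g then 1 else 0)
      = (\<Sum>b\<in>carrier R. if b = inv c \<otimes> g then 1 else (0::real))"
    by (intro sum.cong) auto
  also have "\<dots> = 1" using inv_c g finite_carrier by simp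
  finally show ?thesis .
qed

lemma count_zeros_linear_form:
  assumes \<sigma>: "\<sigma> \<in> carrier R" and \<tau>: "\<tau> \<in> carrier R" and nonzero: "\<sigma> \<noteq> \<zero> \<or> \<tau> \<noteq> \<zero>"
  shows "(\<Sum>t\<in>carrier R. \<Sum>s\<in>carrier R. if s \<otimes> \<sigma> \<oplus> t \<otimes> \<tau> = \<zero> then 1 else 0) = q"
proof (cases "\<sigma> = \<zero>")
  case False
  have "(\<Sum>s\<in>carrier R. if s \<otimes> \<sigma> \<oplus> t \<otimes> \<tau> = \<zero> then 1 else 0) = (1::real)" if t: "t \<in> carrier R" for t
  proof -
    have "s \<otimes> \<sigma> \<oplus> t \<otimes> \<tau> = \<zero> \<longleftrightarrow> \<sigma> \<otimes> s = \<ominus> (t \<otimes> \<tau>)" if "s \<in> carrier R" for s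
      using that t \<sigma> \<tau> minus_equality[of "s \<otimes> \<sigma>" "t \<otimes> \<tau>"] by (auto simp: m_comm l_neg)
    then show ?thesis using count_mult_eq[OF \<sigma> False, of "\<ominus> (t \<otimes> \<tau>)"] t \<tau>
      by (simp cong: sum.cong)
  qed
  then show ?thesis by (simp add: order_def)
next
  case True
  then have "\<tau> \<noteq> \<zero>" using nonzero by simp
  then have "(\<Sum>t\<in>carrier R. \<Sum>s\<in>carrier R. if s \<otimes> \<sigma> \<oplus> t \<otimes> \<tau> = \<zero> then 1 else 0)
      = (\<Sum>t\<in>carrier R. if t = \<zero> then q else 0)"
    using True \<tau> integral by (intro sum.cong refl) (auto simp: order_def)
  also have "\<dots> = q" using finite_carrier by simp
  finally show ?thesis .
qed

lemma count_two_mult_eq: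
  assumes two: "\<one> \<oplus> \<one> \<noteq> \<zero>" and g: "g \<in> carrier R"
  shows "(\<Sum>a\<in>carrier R. \<Sum>b\<in>carrier R. if (\<one> \<oplus> \<one>) \<otimes> a \<otimes> b = g then 1 else 0)
    = (if g = \<zero> then 2 * q - 1 else q - 1)"
proof -
  have "(\<Sum>a\<in>carrier R. \<Sum>b\<in>carrier R. if (\<one> \<oplus> \<one>) \<otimes> a \<otimes> b = g then 1 else 0)
      = (\<Sum>b\<in>carrier R. if (\<one> \<oplus> \<one>) \<otimes> \<zero> \<otimes> b = g then 1 else 0)
        + (\<Sum>a\<in>carrier R - {\<zero>}. \<Sum>b\<in>carrier R. if (\<one> \<oplus> \<one>) \<otimes> a \<otimes> b = g then 1 else (0::real))"
    by (rule sum.remove[OF finite_carrier zero_closed])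
  also have "(\<Sum>b\<in>carrier R. if (\<one> \<oplus> \<one>) \<otimes> \<zero> \<otimes> b = g then 1 else 0) = (if g = \<zero> then q else 0)"
    by (auto simp: order_def)
  also have "(\<Sum>a\<in>carrier R - {\<zero>}. \<Sum>b\<in>carrier R. if (\<one> \<oplus> \<one>) \<otimes> a \<otimes> b = g then 1 else (0::real))
      = (\<Sum>a\<in>carrier R - {\<zero>}. 1)"
    using two g integral by (intro sum.cong refl count_mult_eq) auto
  moreover have "real (card (carrier R - {\<zero>})) = q - 1"
    using finite_carrier order_gt_1 by (simp add: order_def card_Diff_singleton)
  ultimately show ?thesis by (simp add: order_def)
qed

lemma null_orth_count_last_two_coords:
  assumes \<sigma>: "\<sigma> \<in> carrier R" and \<tau>: "\<tau> \<in> carrier R"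
  shows "real (null_orth_count (Suc (Suc m)) (((zero_vector m)(m := \<sigma>))(Suc m := \<tau>)))
    = (\<Sum>t\<in>carrier R. \<Sum>s\<in>carrier R. \<Sum>y\<in>vectors m.
        if dot m y y \<oplus> (s \<otimes> s \<oplus> t \<otimes> t) = \<zero> \<and> s \<otimes> \<sigma> \<oplus> t \<otimes> \<tau> = \<zero> then 1 else 0)"
proof -
  define z0 where "z0 = (zero_vector m)(m := \<sigma>)"
  have z0: "z0 \<in> vectors (Suc m)" using \<sigma> by (simp add: z0_def fun_upd_in_vectors zero_vector_in_vectors)
  have "real (null_orth_count (Suc (Suc m)) (z0(Suc m := \<tau>))) = (\<Sum>t\<in>carrier R. \<Sum>s\<in>carrier R.
      \<Sum>y\<in>vectors m. if dot m y y \<oplus> (s \<otimes> s \<oplus> t \<otimes> t) = \<zero> \<and> s \<otimes> \<sigma> \<oplus> t \<otimes> \<tau> = \<zero> then 1 else 0)"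
    unfolding null_orth_count_def card_vectors_filter_eq_sum sum_vectors_Suc
  proof (intro sum.cong refl)
    fix t s y assume st: "t \<in> carrier R" "s \<in> carrier R" and y: "y \<in> vectors m"
    have ys: "y(m := s) \<in> vectors (Suc m)" using y st by (simp add: fun_upd_in_vectors)
    have "dot (Suc (Suc m)) ((y(m := s))(Suc m := t)) ((y(m := s))(Suc m := t))
        = dot m y y \<oplus> (s \<otimes> s \<oplus> t \<otimes> t)"
      using dot_fun_upd[OF ys ys st(1) st(1)] dot_fun_upd[OF y y st(2) st(2)] st y
      by (simp add: a_assoc dot_closed)
    moreover have "dot (Suc (Suc m)) ((y(m := s))(Suc m := t)) (z0(Suc m := \<tau>)) = s \<otimes> \<sigma> \<oplus> t \<otimes> \<tau>"
      using dot_fun_upd[OF ys z0 st(1) \<tau>] dot_fun_upd[OF y zero_vector_in_vectors st(2) \<sigma>]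
        dot_zero_vector[OF y] st \<sigma> \<tau> by (simp add: z0_def)
    ultimately show "(if dot (Suc (Suc m)) ((y(m := s))(Suc m := t)) ((y(m := s))(Suc m := t)) = \<zero>
          \<and> dot (Suc (Suc m)) ((y(m := s))(Suc m := t)) (z0(Suc m := \<tau>)) = \<zero> then 1 else 0)
        = (if dot m y y \<oplus> (s \<otimes> s \<oplus> t \<otimes> t) = \<zero> \<and> s \<otimes> \<sigma> \<oplus> t \<otimes> \<tau> = \<zero> then 1 else (0::real))"
      by simp
  qed
  then show ?thesis by (simp add: z0_def)
qed

lemma null_orth_count_isotropic:
  assumes two: "\<one> \<oplus> \<one> \<noteq> \<zero>"
    and z: "z \<in> vectors n" and i: "i < n" "z i \<noteq> \<zero>" and zz: "dot n z z = \<zero>"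
  shows "real (null_orth_count n z) = real (norm_count n \<zero>) - (q - 1) * q ^ n / q\<^sup>2"
proof -
  obtain w where w: "w \<in> vectors n" and zw: "dot n z w = \<one>" and ww: "dot n w w = \<zero>"
    using exists_hyperbolic_partner[OF two z i zz] by blast
  define U where "U = {u \<in> vectors n. dot n u z = \<zero> \<and> dot n u w = \<zero>}"
  let ?v = "\<lambda>a b u. lincomb n \<one> (lincomb n a z b w) \<one> u"
  have split_sum: "sum h (vectors n) = (\<Sum>a\<in>carrier R. \<Sum>b\<in>carrier R. \<Sum>u\<in>U. h (?v a b u))" for h :: "_ \<Rightarrow> real"
    unfolding U_def by (rule sum_vectors_hyperbolic_split[OF z w zz ww zw])
  have norm: "dot n (?v a b u) (?v a b u) = (\<one> \<oplus> \<one>) \<otimes> a \<otimes> b \<oplus> dot n u u"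
    and orth: "dot n (?v a b u) z = b"
    if "a \<in> carrier R" "b \<in> carrier R" "u \<in> U" for a b u
    using dot_hyperbolic_split[OF z w zz ww zw that(1,2)] that(3) by (auto simp: U_def)
  have uu: "dot n u u \<in> carrier R" if "u \<in> U" for u using that by (simp add: U_def dot_closed)
  define M where "M = (\<Sum>u\<in>U. if dot n u u = \<zero> then 1 else (0::real))"
  define C where "C = real (card U)"
  \<comment> \<open>an isotropic vector orthogonal to \<open>z\<close> has no \<open>w\<close>-component, and is then free in the \<open>z\<close>-direction\<close>
  have "real (null_orth_count n z) = (\<Sum>a\<in>carrier R. \<Sum>b\<in>carrier R. if b = \<zero> then M else 0)"
    unfolding null_orth_count_def card_vectors_filter_eq_sum split_sum M_def
    using norm orth uu by (intro sum.cong refl) auto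
  also have "\<dots> = q * M" using finite_carrier by (simp add: order_def)
  finally have count_orth: "real (null_orth_count n z) = q * M" .
  have "real (norm_count n \<zero>)
      = (\<Sum>a\<in>carrier R. \<Sum>b\<in>carrier R. \<Sum>u\<in>U. if (\<one> \<oplus> \<one>) \<otimes> a \<otimes> b = \<ominus> dot n u u then 1 else 0)"
    unfolding norm_count_def card_vectors_filter_eq_sum split_sum using norm uu
    by (intro sum.cong refl) (simp add: minus_equality[symmetric] l_neg)
  also have "\<dots> = (\<Sum>u\<in>U. \<Sum>a\<in>carrier R. \<Sum>b\<in>carrier R. if (\<one> \<oplus> \<one>) \<otimes> a \<otimes> b = \<ominus> dot n u u then 1 else 0)"
    by (subst sum.swap, rule sum.swap)
  also have "\<dots> = (\<Sum>u\<in>U. (q - 1) + q * (if dot n u u = \<zero> then 1 else 0))"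
    using count_two_mult_eq[OF two] uu by (intro sum.cong refl) simp
  also have "\<dots> = (q - 1) * C + q * M"
    by (simp add: C_def M_def sum.distrib sum_distrib_left)
  finally have count_null: "real (norm_count n \<zero>) = (q - 1) * C + q * M" .
  have "q ^ n = (\<Sum>v\<in>vectors n. 1::real)" by (simp add: card_vectors order_def)
  also have "\<dots> = q\<^sup>2 * C" unfolding split_sum by (simp add: C_def order_def power2_eq_square)
  finally have "C = q ^ n / q\<^sup>2" using order_gt_1 by simp
  then show ?thesis using count_orth count_null by simp
qed

lemma null_orth_count_collisions:
  assumes A: "A \<subseteq> vectors n"
  shows "real (norm_count n \<zero>) * real (card A) ^ 2
    \<le> q * (\<Sum>a\<in>A. \<Sum>b\<in>A. real (null_orth_count n (lincomb n \<one> a (\<ominus> \<one>) b)))"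
proof -
  have fA: "finite A" using A finite_vectors[OF finite_carrier] by (rule finite_subset)
  let ?diff = "\<lambda>a b. lincomb n \<one> a (\<ominus> \<one>) b"
  let ?null = "\<lambda>m. if dot n m m = \<zero> then 1 else (0::real)"
  let ?orth = "\<lambda>m a b. if dot n m (?diff a b) = \<zero> then 1 else (0::real)"
  have orth_diff: "dot n m (?diff a b) = \<zero> \<longleftrightarrow> dot n m a = dot n m b"
    if m: "m \<in> vectors n" and ab: "a \<in> A" "b \<in> A" for m a b
  proof -
    have "a \<in> vectors n" "b \<in> vectors n" using ab A by auto
    moreover from this have "dot n m (?diff a b) = dot n m a \<ominus> dot n m b"
      using dot_lincomb_right[of \<one> "\<ominus> \<one>" a n b m] m by (simp add: dot_closed minus_eq l_minus)
    ultimately show ?thesis using m by (simp add: dot_closed)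
  qed
  have collisions: "real (card A) ^ 2 \<le> q * (\<Sum>a\<in>A. \<Sum>b\<in>A. ?orth m a b)" if m: "m \<in> vectors n" for m
  proof -
    have "dot n m ` A \<subseteq> carrier R" using m A dot_closed by auto
    from card_squared_le_collisions[OF fA finite_carrier this]
    show ?thesis using m orth_diff by (simp add: order_def cong: sum.cong)
  qed
  have "real (norm_count n \<zero>) * real (card A) ^ 2 = (\<Sum>m\<in>vectors n. ?null m * real (card A) ^ 2)"
    unfolding norm_count_def card_vectors_filter_eq_sum
    by (simp add: sum_distrib_right)
  also have "\<dots> \<le> (\<Sum>m\<in>vectors n. ?null m * (q * (\<Sum>a\<in>A. \<Sum>b\<in>A. ?orth m a b)))"
    using collisions by (intro sum_mono mult_left_mono) auto
  also have "\<dots> = q * (\<Sum>a\<in>A. \<Sum>b\<in>A. \<Sum>m\<in>vectors n. ?null m * ?orth m a b)"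
    by (simp add: sum_distrib_left algebra_simps sum.swap[of _ "vectors n"])
  also have "\<dots> = q * (\<Sum>a\<in>A. \<Sum>b\<in>A. real (null_orth_count n (?diff a b)))"
    unfolding null_orth_count_def card_vectors_filter_eq_sum
    by (intro arg_cong[where f = "(*) q"] sum.cong refl) auto
  finally show ?thesis .
qed

end

section \<open>Finite fields of order 3 mod 4\<close>

locale finite_field_3mod4 = finite_field +
  assumes order_mod_4: "order R mod 4 = 3"
begin

lemma two_ne_zero: "\<one> \<oplus> \<one> \<noteq> \<zero>"
  using order_mod_4 by (intro two_ne_zero_if_odd_order) presburger

lemma minus_one_not_square:
  assumes x: "x \<in> carrier R"
  shows "x \<otimes> x \<noteq> \<ominus> \<one>"
proof
  assume sq: "x \<otimes> x = \<ominus> \<one>"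
  have "x \<noteq> \<zero>"
  proof
    assume "x = \<zero>"
    then have "\<ominus> \<one> = \<zero>" using sq by simp
    then show False by (metis minus_minus minus_zero one_closed zero_not_one)
  qed
  have m: "order R - 1 = 4 * (order R div 4) + 2" using order_mod_4 by presburger
  \<comment> \<open>by Fermat, \<open>1 = x\<^bsup>q-1\<^esup> = (x\<^sup>2)\<^bsup>2m+1\<^esup> = -1\<close>\<close>
  have "\<one> = x [^] (4 * (order R div 4) + 2)" using pow_order_minus_1[OF x \<open>x \<noteq> \<zero>\<close>] m by simp
  also have "\<dots> = x [^] (4 * (order R div 4)) \<otimes> x [^] (2::nat)"
    using x by (simp add: nat_pow_mult)
  also have "x [^] (4 * (order R div 4)) = ((x [^] (2::nat)) [^] (2::nat)) [^] (order R div 4)"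
    using x by (simp add: nat_pow_pow)
  also have "x [^] (2::nat) = \<ominus> \<one>" using sq x by (simp add: numeral_2_eq_2)
  finally have "\<one> = \<ominus> \<one>" by (simp add: numeral_2_eq_2 l_minus r_minus)
  then have "\<one> \<oplus> \<one> = \<zero>" by (metis one_closed r_neg)
  then show False using two_ne_zero by simp
qed

lemma sum_squares_eq_zero_iff:
  assumes x: "x \<in> carrier R" and y: "y \<in> carrier R"
  shows "x \<otimes> x \<oplus> y \<otimes> y = \<zero> \<longleftrightarrow> x = \<zero> \<and> y = \<zero>"
proof
  assume sum: "x \<otimes> x \<oplus> y \<otimes> y = \<zero>"
  show "x = \<zero> \<and> y = \<zero>"
  proof (cases "y = \<zero>")
    case True
    then show ?thesis using sum x integral[of x x] by auto
  next
    case False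
    then have inv_y: "inv y \<in> carrier R" "y \<otimes> inv y = \<one>" using y by (auto simp: field_Units)
    have "x \<otimes> x = \<ominus> (y \<otimes> y)" using minus_equality[of "x \<otimes> x" "y \<otimes> y"] sum x y by simp
    have "(x \<otimes> inv y) \<otimes> (x \<otimes> inv y) = (x \<otimes> x) \<otimes> (inv y \<otimes> inv y)"
      using x inv_y(1) by algebra
    also have "\<dots> = \<ominus> ((y \<otimes> inv y) \<otimes> (y \<otimes> inv y))"
      unfolding \<open>x \<otimes> x = \<ominus> (y \<otimes> y)\<close> using y inv_y(1) by algebra
    finally show ?thesis using minus_one_not_square[of "x \<otimes> inv y"] x inv_y by simp
  qed
qed simp

lemma card_circle_zero: "card (circle \<zero>) = 1"
proof -
  have "{p \<in> carrier R \<times> carrier R. fst p \<otimes> fst p \<oplus> snd p \<otimes> snd p = \<zero>} = {(\<zero>, \<zero>)}"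
    using sum_squares_eq_zero_iff by auto
  then show ?thesis by (simp add: circle_def)
qed

lemma card_circle_eq_one:
  assumes g: "g \<in> carrier R" "g \<noteq> \<zero>"
  shows "card (circle g) = card (circle \<one>)"
proof -
  obtain u v where uv: "u \<in> carrier R" "v \<in> carrier R" and uvg: "u \<otimes> u \<oplus> v \<otimes> v = g"
    using sum_of_two_squares[OF g(1)] by blast
  show ?thesis using bij_betw_same_card[OF bij_betw_circle_rotation[OF uv uvg g(2)]] by simp
qed

lemma card_circle_nonzero:
  assumes "g \<in> carrier R" "g \<noteq> \<zero>"
  shows "card (circle g) = order R + 1"
proof -
  have "(\<Sum>g\<in>carrier R. card (circle g))
      = (\<Sum>g\<in>carrier R. \<Sum>p\<in>{p \<in> carrier R \<times> carrier R. fst p \<otimes> fst p \<oplus> snd p \<otimes> snd p = g}. 1)"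
    by (simp add: circle_def)
  also have "\<dots> = (\<Sum>p\<in>carrier R \<times> carrier R. 1)"
    by (rule sum.group) (use finite_carrier in auto)
  finally have "order R * order R = (\<Sum>g\<in>carrier R. card (circle g))"
    by (simp add: order_def card_cartesian_product)
  also have "\<dots> = card (circle \<zero>) + (\<Sum>g\<in>carrier R - {\<zero>}. card (circle g))"
    using finite_carrier by (rule sum.remove) simp
  also have "(\<Sum>g\<in>carrier R - {\<zero>}. card (circle g)) = (\<Sum>g\<in>carrier R - {\<zero>}. card (circle \<one>))"
    by (intro sum.cong refl card_circle_eq_one) auto
  finally have "order R * order R = 1 + (order R - 1) * card (circle \<one>)"
    using finite_carrier by (simp add: card_circle_zero card_Diff_singleton order_def)
  then have "(order R - 1) * (order R + 1) = (order R - 1) * card (circle \<one>)"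
    using order_gt_1 by (cases "order R") (auto simp: algebra_simps)
  then have "card (circle \<one>) = order R + 1"
    using order_gt_1 nat_mult_eq_cancel1[of "order R - 1" "order R + 1" "card (circle \<one>)"] by simp
  then show ?thesis using card_circle_eq_one[OF assms] by simp
qed

lemma count_sum_two_squares:
  assumes g: "g \<in> carrier R"
  shows "(\<Sum>s\<in>carrier R. \<Sum>t\<in>carrier R. if s \<otimes> s \<oplus> t \<otimes> t = g then 1 else 0)
    = (if g = \<zero> then 1 else q + 1)"
proof -
  have "real (card (circle g))
      = (\<Sum>p\<in>carrier R \<times> carrier R. if fst p \<otimes> fst p \<oplus> snd p \<otimes> snd p = g then 1 else 0)"
    unfolding circle_def using finite_carrier by (simp add: card_filter_eq_sum_indicator)
  then show ?thesis
    using g card_circle_zero card_circle_nonzero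
    by (auto simp: sum.cartesian_product split_def)
qed

lemma norm_count_Suc_Suc:
  assumes e: "e \<in> carrier R"
  shows "real (norm_count (Suc (Suc n)) e) = (q + 1) * q ^ n - q * real (norm_count n e)"
proof -
  define X where "X y s t = (if dot n y y \<oplus> s \<otimes> s \<oplus> t \<otimes> t = e then 1 else (0::real))" for y s t
  have "real (norm_count (Suc (Suc n)) e) = (\<Sum>t\<in>carrier R. \<Sum>s\<in>carrier R. \<Sum>y\<in>vectors n. X y s t)"
    unfolding norm_count_def card_vectors_filter_eq_sum sum_vectors_Suc X_def
    by (intro sum.cong refl) (simp add: dot_fun_upd fun_upd_in_vectors)
  also have "\<dots> = (\<Sum>y\<in>vectors n. \<Sum>t\<in>carrier R. \<Sum>s\<in>carrier R. X y s t)"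
    by (subst sum.swap) (simp add: sum.swap[of _ "carrier R" "vectors n"])
  also have "\<dots> = (\<Sum>y\<in>vectors n. \<Sum>s\<in>carrier R. \<Sum>t\<in>carrier R.
      if s \<otimes> s \<oplus> t \<otimes> t = e \<ominus> dot n y y then 1 else 0)"
    unfolding X_def
  proof (subst sum.swap, intro sum.cong refl)
    fix y s t assume "y \<in> vectors n" "s \<in> carrier R" "t \<in> carrier R"
    moreover have "a \<oplus> x = e \<longleftrightarrow> x = e \<ominus> a" if "a \<in> carrier R" "x \<in> carrier R" for a x
    proof -
      have "x = (a \<oplus> x) \<ominus> a" "a \<oplus> (e \<ominus> a) = e" using that e by algebra+
      then show ?thesis by auto
    qed
    ultimately show "(if dot n y y \<oplus> s \<otimes> s \<oplus> t \<otimes> t = e then 1 else 0)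
        = (if s \<otimes> s \<oplus> t \<otimes> t = e \<ominus> dot n y y then 1 else (0::real))"
      by (simp add: a_assoc dot_closed)
  qed
  also have "\<dots> = (\<Sum>y\<in>vectors n. (q + 1) - q * (if dot n y y = e then 1 else 0))"
    using e by (intro sum.cong refl) (simp add: count_sum_two_squares dot_closed)
  also have "\<dots> = (q + 1) * q ^ n - q * real (norm_count n e)"
    unfolding norm_count_def card_vectors_filter_eq_sum sum_subtractf sum_distrib_left[symmetric]
    by (simp add: card_vectors order_def)
  finally show ?thesis .
qed

lemma norm_count_even:
  assumes e: "e \<in> carrier R"
  shows "q * real (norm_count (2 * j) e)
    = q ^ (2 * j) + (if e = \<zero> then (-1) ^ j * (q - 1) * q ^ j else - ((-1) ^ j * q ^ j))"
proof (induction j)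
  case 0
  show ?case by (simp add: norm_count_def vectors_def dot_def)
next
  case (Suc j)
  have "q * real (norm_count (2 * Suc j) e) = q * ((q + 1) * q ^ (2 * j)) - q * (q * real (norm_count (2 * j) e))"
    using norm_count_Suc_Suc[OF e, of "2 * j"] by (simp add: right_diff_distrib)
  also have "\<dots> = q ^ (2 * Suc j)
      + (if e = \<zero> then (-1) ^ Suc j * (q - 1) * q ^ Suc j else - ((-1) ^ Suc j * q ^ Suc j))"
    unfolding Suc.IH by (simp add: algebra_simps power2_eq_square)
  finally show ?case .
qed

lemma norm_count_even_nonzero:
  assumes "e \<in> carrier R" "e \<noteq> \<zero>"
  shows "norm_count (2 * j) e = norm_count (2 * j) \<one>"
proof -
  have "q * real (norm_count (2 * j) e) = q * real (norm_count (2 * j) \<one>)"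
    using norm_count_even[of e j] norm_count_even[OF one_closed, of j] assms by simp
  then show ?thesis using order_gt_1 by simp
qed

lemma norm_count_even_total:
  "real (norm_count (2 * j) \<zero>) + (q - 1) * real (norm_count (2 * j) \<one>) = q ^ (2 * j)"
proof -
  have "q * (real (norm_count (2 * j) \<zero>) + (q - 1) * real (norm_count (2 * j) \<one>))
      = q * real (norm_count (2 * j) \<zero>) + (q - 1) * (q * real (norm_count (2 * j) \<one>))"
    by (simp add: algebra_simps)
  also have "\<dots> = q * q ^ (2 * j)"
    unfolding norm_count_even[OF zero_closed] norm_count_even[OF one_closed] by (simp add: algebra_simps)
  finally show ?thesis using order_gt_1 by simp
qed

lemma null_orth_count_standard:
  assumes \<sigma>: "\<sigma> \<in> carrier R" and \<tau>: "\<tau> \<in> carrier R" and anisotropic: "\<sigma> \<otimes> \<sigma> \<oplus> \<tau> \<otimes> \<tau> \<noteq> \<zero>"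
  shows "real (null_orth_count (Suc (Suc (2 * j))) (((zero_vector (2 * j))(2 * j := \<sigma>))(Suc (2 * j) := \<tau>)))
    = q ^ (2 * j)"
proof -
  let ?m = "2 * j"
  define E where "E = real (norm_count ?m \<one>)"
  define C0 where "C0 = real (norm_count ?m \<zero>)"
  \<comment> \<open>a vector \<open>(y, s, t)\<close> is isotropic iff \<open>y\<close> has norm \<open>-(s\<^sup>2 + t\<^sup>2)\<close>, a norm which is nonzero unless \<open>s = t = 0\<close>\<close>
  have fiber: "(\<Sum>y\<in>vectors ?m. if dot ?m y y \<oplus> (s \<otimes> s \<oplus> t \<otimes> t) = \<zero> then 1 else 0)
      = (if s = \<zero> \<and> t = \<zero> then C0 else E)" if st: "s \<in> carrier R" "t \<in> carrier R" for s t
  proof -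
    have "dot ?m y y \<oplus> (s \<otimes> s \<oplus> t \<otimes> t) = \<zero> \<longleftrightarrow> dot ?m y y = \<ominus> (s \<otimes> s \<oplus> t \<otimes> t)"
      if "y \<in> vectors ?m" for y
      using that st minus_equality[of "dot ?m y y" "s \<otimes> s \<oplus> t \<otimes> t"] by (auto simp: dot_closed l_neg)
    then have "(\<Sum>y\<in>vectors ?m. if dot ?m y y \<oplus> (s \<otimes> s \<oplus> t \<otimes> t) = \<zero> then 1 else 0)
        = real (norm_count ?m (\<ominus> (s \<otimes> s \<oplus> t \<otimes> t)))"
      unfolding norm_count_def card_vectors_filter_eq_sum by (intro sum.cong) auto
    moreover have "\<ominus> (s \<otimes> s \<oplus> t \<otimes> t) \<noteq> \<zero>" if "\<not> (s = \<zero> \<and> t = \<zero>)"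
      using that st sum_squares_eq_zero_iff by simp
    ultimately show ?thesis
      using st norm_count_even_nonzero[of "\<ominus> (s \<otimes> s \<oplus> t \<otimes> t)" j] by (auto simp: C0_def E_def)
  qed
  have "real (null_orth_count (Suc (Suc ?m)) (((zero_vector ?m)(?m := \<sigma>))(Suc ?m := \<tau>)))
      = (\<Sum>t\<in>carrier R. \<Sum>s\<in>carrier R. \<Sum>y\<in>vectors ?m.
          if dot ?m y y \<oplus> (s \<otimes> s \<oplus> t \<otimes> t) = \<zero> \<and> s \<otimes> \<sigma> \<oplus> t \<otimes> \<tau> = \<zero> then 1 else 0)"
    by (rule null_orth_count_last_two_coords[OF \<sigma> \<tau>])
  also have "\<dots> = (\<Sum>t\<in>carrier R. \<Sum>s\<in>carrier R.
      E * (if s \<otimes> \<sigma> \<oplus> t \<otimes> \<tau> = \<zero> then 1 else 0) + (C0 - E) * (if s = \<zero> \<and> t = \<zero> then 1 else 0))"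
  proof (intro sum.cong refl)
    fix t s assume "t \<in> carrier R" "s \<in> carrier R"
    then show "(\<Sum>y\<in>vectors ?m. if dot ?m y y \<oplus> (s \<otimes> s \<oplus> t \<otimes> t) = \<zero> \<and> s \<otimes> \<sigma> \<oplus> t \<otimes> \<tau> = \<zero> then 1 else 0)
        = E * (if s \<otimes> \<sigma> \<oplus> t \<otimes> \<tau> = \<zero> then 1 else 0) + (C0 - E) * (if s = \<zero> \<and> t = \<zero> then 1 else 0)"
      using fiber[of s t] \<sigma> \<tau> by (cases "s \<otimes> \<sigma> \<oplus> t \<otimes> \<tau> = \<zero>") auto
  qed
  also have "\<dots> = E * q + (C0 - E)"
  proof -
    have "\<sigma> \<noteq> \<zero> \<or> \<tau> \<noteq> \<zero>" using anisotropic by auto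
    moreover have "(\<Sum>t\<in>carrier R. \<Sum>s\<in>carrier R. if s = \<zero> \<and> t = \<zero> then 1 else 0)
        = (\<Sum>t\<in>carrier R. if t = \<zero> then 1 else (0::real))"
      using finite_carrier by (intro sum.cong refl) simp
    moreover have "(\<Sum>t\<in>carrier R. if t = \<zero> then 1 else (0::real)) = 1"
      using finite_carrier by simp
    ultimately show ?thesis
      using count_zeros_linear_form[OF \<sigma> \<tau>] by (simp add: sum.distrib sum_distrib_left[symmetric])
  qed
  also have "\<dots> = q ^ ?m"
    using norm_count_even_total[of j] by (simp add: C0_def E_def algebra_simps)
  finally show ?thesis .
qed

lemma null_orth_count_anisotropic:
  assumes z: "z \<in> vectors (Suc (Suc (2 * j)))" and anisotropic: "dot (Suc (Suc (2 * j))) z z \<noteq> \<zero>"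
  shows "real (null_orth_count (Suc (Suc (2 * j))) z) = q ^ (2 * j)"
proof -
  let ?m = "2 * j"
  obtain \<sigma> \<tau> where \<sigma>: "\<sigma> \<in> carrier R" and \<tau>: "\<tau> \<in> carrier R"
    and norm: "\<sigma> \<otimes> \<sigma> \<oplus> \<tau> \<otimes> \<tau> = dot (Suc (Suc ?m)) z z"
    using sum_of_two_squares[OF dot_closed[OF z z]] by blast
  define z' where "z' = ((zero_vector ?m)(?m := \<sigma>))(Suc ?m := \<tau>)"
  have z0: "(zero_vector ?m)(?m := \<sigma>) \<in> vectors (Suc ?m)"
    using \<sigma> by (simp add: fun_upd_in_vectors zero_vector_in_vectors)
  have z': "z' \<in> vectors (Suc (Suc ?m))" using z0 \<tau> by (simp add: z'_def fun_upd_in_vectors)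
  have "dot (Suc (Suc ?m)) z' z' = dot ?m (zero_vector ?m) (zero_vector ?m) \<oplus> \<sigma> \<otimes> \<sigma> \<oplus> \<tau> \<otimes> \<tau>"
    unfolding z'_def using dot_fun_upd[OF z0 z0 \<tau> \<tau>] dot_fun_upd[OF zero_vector_in_vectors zero_vector_in_vectors \<sigma> \<sigma>]
    by simp
  then have "dot (Suc (Suc ?m)) z z = dot (Suc (Suc ?m)) z' z'"
    using norm dot_zero_vector[OF zero_vector_in_vectors] \<sigma> \<tau> by simp
  then have "null_orth_count (Suc (Suc ?m)) z = null_orth_count (Suc (Suc ?m)) z'"
    by (rule null_orth_count_eq_if_equal_norm[OF two_ne_zero z z' _ anisotropic])
  then show ?thesis
    using null_orth_count_standard[OF \<sigma> \<tau>] norm anisotropic by (simp add: z'_def)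
qed

lemma norm_count_zero_dim_2mod4:
  "real (norm_count (4 * k + 2) \<zero>) = q * (q ^ (2 * k))\<^sup>2 - (q - 1) * q ^ (2 * k)"
proof -
  have "q * real (norm_count (2 * (2 * k + 1)) \<zero>) = q ^ (2 * (2 * k + 1)) - (q - 1) * q ^ (2 * k + 1)"
    using norm_count_even[OF zero_closed, of "2 * k + 1"] by (simp add: algebra_simps)
  also have "q ^ (2 * (2 * k + 1)) = q * q * (q ^ (2 * k) * q ^ (2 * k))"
    by (simp add: power_add[symmetric] mult.commute)
  also have "q * q * (q ^ (2 * k) * q ^ (2 * k)) - (q - 1) * q ^ (2 * k + 1)
      = q * (q * (q ^ (2 * k))\<^sup>2 - (q - 1) * q ^ (2 * k))"
    by (simp add: power2_eq_square algebra_simps)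
  finally show ?thesis using order_gt_1 by (simp add: mult.commute)
qed

lemma null_orth_count_dim_2mod4:
  assumes z: "z \<in> vectors (4 * k + 2)"
  shows "real (null_orth_count (4 * k + 2) z) = (q ^ (2 * k))\<^sup>2
    - (q - 1) * q ^ (2 * k) * (if dot (4 * k + 2) z z = \<zero> then 1 else 0)
    + (q - 1) * (q ^ (2 * k))\<^sup>2 * (if z = zero_vector (4 * k + 2) then 1 else 0)"
proof -
  let ?d = "4 * k + 2" and ?P = "q ^ (2 * k)"
  have d: "?d = Suc (Suc (2 * (2 * k)))" by simp
  consider "z = zero_vector ?d" | "z \<noteq> zero_vector ?d" "dot ?d z z = \<zero>" | "dot ?d z z \<noteq> \<zero>"
    by blast
  then show ?thesis
  proof cases
    case 1
    have "null_orth_count ?d z = norm_count ?d \<zero>"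
      unfolding null_orth_count_def norm_count_def 1
      by (intro arg_cong[where f = card] Collect_cong) (auto simp: dot_zero_vector)
    then show ?thesis
      using 1 norm_count_zero_dim_2mod4 dot_zero_vector[OF zero_vector_in_vectors] by (simp add: algebra_simps)
  next
    case 2
    then obtain i where i: "i < ?d" "z i \<noteq> \<zero>"
      using z zero_vector_in_vectors by (metis vector_eqI zero_vector_def restrict_apply' lessThan_iff)
    have "q ^ ?d = q\<^sup>2 * ?P\<^sup>2" by (simp add: power_mult[symmetric] power_add[symmetric])
    then have "(q - 1) * q ^ ?d / q\<^sup>2 = (q - 1) * ?P\<^sup>2" using order_gt_1 by simp
    then show ?thesis
      using 2 null_orth_count_isotropic[OF two_ne_zero z i] norm_count_zero_dim_2mod4[of k]
      by (simp add: algebra_simps)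
  next
    case 3
    then have "z \<noteq> zero_vector ?d" using dot_zero_vector[OF zero_vector_in_vectors] by auto
    then show ?thesis
      using 3 null_orth_count_anisotropic[of z "2 * k"] z
      by (simp add: power_mult[symmetric] mult.commute)
  qed
qed

lemma null_pairs_bound:
  assumes A: "A \<subseteq> vectors (4 * k + 2)"
  shows "real (null_pairs R (4 * k + 2) A) \<le> real (card A) ^ 2 / q + q ^ (2 * k) * real (card A)"
proof -
  let ?d = "4 * k + 2" and ?P = "q ^ (2 * k)"
  let ?diff = "\<lambda>a b. lincomb ?d \<one> a (\<ominus> \<one>) b"
  define N where "N = real (null_pairs R ?d A)"
  have fA: "finite A" using A finite_vectors[OF finite_carrier] by (rule finite_subset)
  have V: "a \<in> vectors ?d" if "a \<in> A" for a using A that by auto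
  have diff_zero: "?diff a b = zero_vector ?d \<longleftrightarrow> a = b" if "a \<in> A" "b \<in> A" for a b
    using lincomb_minus_eq_zero_iff V that by blast
  have "N = (\<Sum>a\<in>A. \<Sum>b\<in>A. if dot ?d (?diff a b) (?diff a b) = \<zero> then 1 else 0)"
    unfolding N_def using fA A by (rule null_pairs_eq_sum)
  moreover have "(\<Sum>a\<in>A. \<Sum>b\<in>A. if a = b then 1 else 0) = real (card A)"
    using fA by simp
  ultimately have "(\<Sum>a\<in>A. \<Sum>b\<in>A. real (null_orth_count ?d (?diff a b)))
      = ?P ^ 2 * real (card A) ^ 2 - (q - 1) * ?P * N + (q - 1) * ?P ^ 2 * real (card A)"
    using null_orth_count_dim_2mod4 V diff_zero
    by (simp add: lincomb_in_vectors sum.distrib sum_subtractf sum_distrib_left[symmetric]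
        power2_eq_square cong: sum.cong)
  with null_orth_count_collisions[OF A]
  have "(q * ?P ^ 2 - (q - 1) * ?P) * real (card A) ^ 2
      \<le> q * (?P ^ 2 * real (card A) ^ 2 - (q - 1) * ?P * N + (q - 1) * ?P ^ 2 * real (card A))"
    using norm_count_zero_dim_2mod4[of k] by simp
  then have "((q - 1) * ?P) * (q * N) \<le> ((q - 1) * ?P) * (real (card A) ^ 2 + q * ?P * real (card A))"
    by (simp add: algebra_simps power2_eq_square)
  then have "q * N \<le> real (card A) ^ 2 + q * ?P * real (card A)"
    using order_gt_1 by (simp add: mult_le_cancel_left_pos)
  then show ?thesis using order_gt_1 by (simp add: N_def field_simps)
qed

end

theorem lemma2p2:
  fixes k :: nat
  assumes "k > 0"
  shows "\<exists>C::real. \<forall>(R::nat ring) (A::(nat \<Rightarrow> nat) set).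
           field R \<and> finite (carrier R)
           \<and> (\<exists>p n. prime (p::nat) \<and> odd p \<and> card (carrier R) = p ^ n)
           \<and> card (carrier R) mod 4 = 3
           \<and> A \<subseteq> ({..<4*k+2} \<rightarrow>\<^sub>E carrier R)
           \<longrightarrow> real (null_pairs R (4*k+2) A)
                 \<le> C * (real (card A) ^ 2 / real (card (carrier R))
                        + real (card (carrier R)) ^ ((4*k+2-2) div 2) * real (card A))"
proof (intro exI[of _ "1::real"] allI impI)
  \<comment> \<open>\<open>C = 1\<close> works.\<close>
  fix R :: "nat ring" and A :: "(nat \<Rightarrow> nat) set"
  assume H: "field R \<and> finite (carrier R)
           \<and> (\<exists>p n. prime (p::nat) \<and> odd p \<and> card (carrier R) = p ^ n)
           \<and> card (carrier R) mod 4 = 3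
           \<and> A \<subseteq> ({..<4*k+2} \<rightarrow>\<^sub>E carrier R)"
  then interpret finite_field_3mod4 R
    unfolding finite_field_3mod4_def finite_field_3mod4_axioms_def finite_field_def finite_field_axioms_def
    by (simp add: order_def)
  have "A \<subseteq> vectors (4 * k + 2)" using H by (simp add: vectors_def)
  then show "real (null_pairs R (4*k+2) A)
      \<le> 1 * (real (card A) ^ 2 / real (card (carrier R))
             + real (card (carrier R)) ^ ((4*k+2-2) div 2) * real (card A))"
    using null_pairs_bound by (simp add: order_def)
qed

end
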